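(* For $n>2$, the image $\eta(G_{n,\mathcal{P}}^2)$ of $G_{n,\mathcal{P}}^2$ under the homomorphism $\eta\colon G_{n,\mathcal{P}}^2\to G_{n,\mathcal{D}}^2$ is isomorphic to $H_{n,\mathcal{D}}^2$.
   Context: $G_{n,\mathcal{P}}^2$ has generators $a_{ij}^{\epsilon}$ ($\{i,j\}\subset\{1,\dots,n\}$, $i<j$, $\epsilon\in\{0,1\}$) and relations $(a_{ij}^\epsilon)^2=1$; $a_{ij}^{\epsilon}a_{kl}^{\epsilon'}=a_{kl}^{\epsilon'}a_{ij}^{\epsilon}$ for $\{i,j\}\cap\{k,l\}=\emptyset$; $a_{ij}^{\epsilon_{ij}}a_{ik}^{\epsilon_{ik}}a_{jk}^{\epsilon_{jk}}=a_{jk}^{\epsilon_{jk}}a_{ik}^{\epsilon_{ik}}a_{ij}^{\epsilon_{ij}}$ for distinct $i,j,k$ with $\epsilon_{ij}+\epsilon_{ik}+\epsilon_{jk}\equiv0\pmod2$. $G_{n,\mathcal{D}}^2$ has generators $a_{ij}$ ($i<j$) and $\tau_i$ ($1\le i\le n$) with relations: $a_{ij}^2=1$; $a_{ij}a_{kl}=a_{kl}a_{ij}$ for distinct $i,j,k,l$; $a_{ij}a_{ik}a_{jk}=a_{jk}a_{ik}a_{ij}$ for distinct $i,j,k$; $\tau_i^2=1$; $\tau_i\tau_j=\tau_j\tau_i$; $\tau_i\tau_ja_{ij}\tau_j\tau_i=a_{ij}$; $a_{ij}\tau_k=\tau_ka_{ij}$ for distinct $i,j,k$. $H_{n,\mathcal{D}}^2$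 is the subgroup of $G_{n,\mathcal{D}}^2$ of elements represented by words in which, for each $i$, the number of letters $\tau_i$ is even (well defined since the relations preserve these parities). $\eta$ is the homomorphism with $\eta(a_{ij}^0)=a_{ij}$ and $\eta(a_{ij}^1)=\tau_ia_{ij}\tau_i$ for $i<j$. *)

theory Defs
  imports "HOL-Algebra.Group"
begin

text \<open>All generators of the groups considered here satisfy the relation x^2 = 1,
so every group element is represented by a positive word (inverse of a word = its
reverse).\<close>

inductive_set pres_eq :: "'g set \<Rightarrow> ('g list \<times> 'g list) set \<Rightarrow> ('g list \<times> 'g list) set"
  for S R where
  refl: "w \<in> lists S \<Longrightarrow> (w, w) \<in> pres_eq S R"
| sym: "(u, v) \<in> pres_eq S R \<Longrightarrow> (v, u) \<in> pres_eq S R"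
| trans: "(u, v) \<in> pres_eq S R \<Longrightarrow> (v, w) \<in> pres_eq S R \<Longrightarrow> (u, w) \<in> pres_eq S R"
| rel: "(u, v) \<in> R \<Longrightarrow> xs \<in> lists S \<Longrightarrow> ys \<in> lists S \<Longrightarrow>
        (xs @ u @ ys, xs @ v @ ys) \<in> pres_eq S R"

definition presented_group :: "'g set \<Rightarrow> ('g list \<times> 'g list) set \<Rightarrow> 'g list set monoid" where
  "presented_group S R =
     \<lparr> carrier = lists S // pres_eq S R,
       mult = (\<lambda>X Y. \<Union>x\<in>X. \<Union>y\<in>Y. pres_eq S R `` {x @ y}),
       one = pres_eq S R `` {[]} \<rparr>"

text \<open>Generator a_{ij}^e (i<j) is encoded as (i, j, e) with e = True meaning epsilon = 1.
For an unordered pair {i,j}, aP i j e denotes the generator a_{min,max}^e.\<close>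

type_synonym pgen = "nat \<times> nat \<times> bool"

definition aP :: "nat \<Rightarrow> nat \<Rightarrow> bool \<Rightarrow> pgen" where
  "aP i j e = (min i j, max i j, e)"

definition gensP :: "nat \<Rightarrow> pgen set" where
  "gensP n = {(i, j, e) | i j e. 1 \<le> i \<and> i < j \<and> j \<le> n}"

definition relsP :: "nat \<Rightarrow> (pgen list \<times> pgen list) set" where
  "relsP n =
     {([g, g], []) | g. g \<in> gensP n}
   \<union> {([(i, j, e), (k, l, e')], [(k, l, e'), (i, j, e)]) | i j e k l e'.
        (i, j, e) \<in> gensP n \<and> (k, l, e') \<in> gensP n \<and> {i, j} \<inter> {k, l} = {}}
   \<union> {([aP i j eij, aP i k eik, aP j k ejk], [aP j k ejk, aP i k eik, aP i j eij])
        | i j k eij eik ejk. i \<in> {1..n} \<and> j \<in> {1..n} \<and> k \<in> {1..n} \<and>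
          i \<noteq> j \<and> i \<noteq> k \<and> j \<noteq> k \<and>
          even (of_bool eij + of_bool eik + of_bool ejk :: nat)}"

definition GP :: "nat \<Rightarrow> pgen list set monoid" where
  "GP n = presented_group (gensP n) (relsP n)"

datatype dgen = A nat nat | T nat

definition aD :: "nat \<Rightarrow> nat \<Rightarrow> dgen" where
  "aD i j = A (min i j) (max i j)"

definition gensD :: "nat \<Rightarrow> dgen set" where
  "gensD n = {A i j | i j. 1 \<le> i \<and> i < j \<and> j \<le> n} \<union> {T i | i. 1 \<le> i \<and> i \<le> n}"

definition relsD :: "nat \<Rightarrow> (dgen list \<times> dgen list) set" where
  "relsD n =
     {([A i j, A i j], []) | i j. A i j \<in> gensD n}
   \<union> {([A i j, A k l], [A k l, A i j]) | i j k l.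
        A i j \<in> gensD n \<and> A k l \<in> gensD n \<and> {i, j} \<inter> {k, l} = {}}
   \<union> {([aD i j, aD i k, aD j k], [aD j k, aD i k, aD i j]) | i j k.
        i \<in> {1..n} \<and> j \<in> {1..n} \<and> k \<in> {1..n} \<and> i \<noteq> j \<and> i \<noteq> k \<and> j \<noteq> k}
   \<union> {([T i, T i], []) | i. T i \<in> gensD n}
   \<union> {([T i, T j], [T j, T i]) | i j. T i \<in> gensD n \<and> T j \<in> gensD n}
   \<union> {([T i, T j, A i j, T j, T i], [A i j]) | i j. A i j \<in> gensD n}
   \<union> {([A i j, T k], [T k, A i j]) | i j k.
        A i j \<in> gensD n \<and> T k \<in> gensD n \<and> k \<noteq> i \<and> k \<noteq> j}"

definition GD :: "nat \<Rightarrow> dgen list set monoid" where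
  "GD n = presented_group (gensD n) (relsD n)"

text \<open>H^2_{n,D}: elements represented by a word with an even number of letters tau_i
for each i (the parity is independent of the representative).\<close>

definition HD_carrier :: "nat \<Rightarrow> dgen list set set" where
  "HD_carrier n = {X \<in> carrier (GD n).
     \<exists>w \<in> X. \<forall>i. even (length (filter (\<lambda>x. x = T i) w))}"

definition HD :: "nat \<Rightarrow> dgen list set monoid" where
  "HD n = (GD n)\<lparr>carrier := HD_carrier n\<rparr>"

fun eta_letter :: "pgen \<Rightarrow> dgen list" where
  "eta_letter (i, j, e) = (if e then [T i, A i j, T i] else [A i j])"

definition eta :: "nat \<Rightarrow> pgen list set \<Rightarrow> dgen list set" where
  "eta n X = (\<Union>w\<in>X. pres_eq (gensD n) (relsD n) `` {concat (map eta_letter w)})"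

definition eta_image :: "nat \<Rightarrow> dgen list set monoid" where
  "eta_image n = (GD n)\<lparr>carrier := eta n ` carrier (GP n)\<rparr>"

end

theory Submission
  imports Defs
begin

text \<open>Each generator \<open>a\<^sub>i\<^sub>j\<^sup>\<epsilon>\<close> is sent to a word containing \<open>\<tau>\<^sub>i\<close> zero or two times,
  so the image of \<open>\<eta>\<close> lies in \<open>H\<close>. Conversely, \<open>\<tau>\<^sub>k \<eta>(a\<^sub>i\<^sub>j\<^sup>\<epsilon>) \<tau>\<^sub>k = \<eta>(a\<^sub>i\<^sub>j\<^sup>\<epsilon>\<^sup>')\<close>
  with \<open>\<epsilon>' = \<epsilon> + [k \<in> {i, j}] mod 2\<close>, so in any word of \<open>G\<^sub>D\<close> the letters \<open>\<tau>\<^sub>k\<close> can be pushed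
  to the right end, leaving \<open>\<eta>(u) t\<close> with \<open>t\<close> a word in the \<open>\<tau>\<^sub>k\<close> alone. The \<open>\<tau>\<^sub>k\<close> are
  commuting involutions, so \<open>t = 1\<close> when every \<open>\<tau>\<^sub>k\<close> occurs an even number of times.
  Hence \<open>\<eta>(G\<^sub>P)\<close> and \<open>H\<close> are the same subgroup of \<open>G\<^sub>D\<close>.\<close>

section \<open>Presentations by involutive generators\<close>

lemma pres_eq_context:
  assumes "(u, v) \<in> pres_eq S R" "xs \<in> lists S" "ys \<in> lists S"
  shows "(xs @ u @ ys, xs @ v @ ys) \<in> pres_eq S R"
  using assms
proof (induction arbitrary: xs ys rule: pres_eq.induct)
  case (refl w)
  then show ?case by (intro pres_eq.refl) auto
next
  case (sym u v)
  then show ?case by (blast intro: pres_eq.sym)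
next
  case (trans u v w)
  then show ?case by (blast intro: pres_eq.trans)
next
  case (rel u v xs' ys')
  have "((xs @ xs') @ u @ (ys' @ ys), (xs @ xs') @ v @ (ys' @ ys)) \<in> pres_eq S R"
    using rel by (intro pres_eq.rel) auto
  then show ?case by simp
qed

context
  fixes S :: "'g set" and R :: "('g list \<times> 'g list) set"
  assumes rels_in_lists: "R \<subseteq> lists S \<times> lists S"
begin

lemma pres_eq_in_lists: "(u, v) \<in> pres_eq S R \<Longrightarrow> u \<in> lists S \<and> v \<in> lists S"
  by (induction rule: pres_eq.induct) (use rels_in_lists in auto)

lemma equiv_pres_eq: "equiv (lists S) (pres_eq S R)"
proof (rule equivI)
  show "pres_eq S R \<subseteq> lists S \<times> lists S"
    using pres_eq_in_lists by auto
  then show "refl_on (lists S) (pres_eq S R)"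
    by (auto simp: refl_on_def intro: pres_eq.refl)
  show "sym (pres_eq S R)"
    by (auto simp: sym_def intro: pres_eq.sym)
  show "trans (pres_eq S R)"
    by (auto simp: trans_def intro: pres_eq.trans)
qed

lemma pres_eq_append:
  assumes "(u, v) \<in> pres_eq S R" "(u', v') \<in> pres_eq S R"
  shows "(u @ u', v @ v') \<in> pres_eq S R"
proof -
  have "([] @ u @ u', [] @ v @ u') \<in> pres_eq S R"
    using assms pres_eq_in_lists by (intro pres_eq_context) auto
  moreover have "(v @ u' @ [], v @ v' @ []) \<in> pres_eq S R"
    using assms pres_eq_in_lists by (intro pres_eq_context) auto
  ultimately show ?thesis
    by (auto intro: pres_eq.trans)
qed

lemma pres_eq_commute_letter_word:
  "a \<in> S \<Longrightarrow> y \<in> lists S \<Longrightarrow> \<forall>b \<in> set y. ([a, b], [b, a]) \<in> pres_eq S R \<Longrightarrow>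
   (a # y, y @ [a]) \<in> pres_eq S R"
proof (induction y)
  case Nil
  then show ?case
    by (auto intro: pres_eq.refl)
next
  case (Cons b y)
  have "([a, b] @ y, [b, a] @ y) \<in> pres_eq S R"
    by (rule pres_eq_append[OF _ pres_eq.refl]) (use Cons.prems in auto)
  moreover have "([b] @ a # y, [b] @ y @ [a]) \<in> pres_eq S R"
    by (rule pres_eq_append[OF pres_eq.refl]) (use Cons in auto)
  ultimately show ?case
    by (auto intro: pres_eq.trans)
qed

lemma pres_eq_commute_words:
  "x \<in> lists S \<Longrightarrow> y \<in> lists S \<Longrightarrow> \<forall>a \<in> set x. \<forall>b \<in> set y. ([a, b], [b, a]) \<in> pres_eq S R \<Longrightarrow>
   (x @ y, y @ x) \<in> pres_eq S R"
proof (induction x)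
  case Nil
  then show ?case by (auto intro: pres_eq.refl)
next
  case (Cons a x)
  have "((a # y) @ x, (y @ [a]) @ x) \<in> pres_eq S R"
    by (rule pres_eq_append[OF pres_eq_commute_letter_word pres_eq.refl]) (use Cons.prems in auto)
  moreover have "([a] @ x @ y, [a] @ y @ x) \<in> pres_eq S R"
    by (rule pres_eq_append[OF pres_eq.refl]) (use Cons in auto)
  ultimately show ?case
    by (auto intro: pres_eq.trans)
qed

context
  fixes L :: "'g set"
  assumes involution: "\<And>x. x \<in> L \<Longrightarrow> ([x, x], []) \<in> pres_eq S R"
    and commute: "\<And>x y. x \<in> L \<Longrightarrow> y \<in> L \<Longrightarrow> ([x, y], [y, x]) \<in> pres_eq S R"
begin

lemma pres_eq_Cons_remove1:
  assumes "ts \<in> lists L" "x \<in> set ts"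
  shows "(x # ts, remove1 x ts) \<in> pres_eq S R"
proof -
  obtain r1 r2 where ts: "ts = r1 @ x # r2" "x \<notin> set r1"
    using assms(2) by (meson split_list_first)
  have "L \<subseteq> S"
    using involution pres_eq_in_lists by fastforce
  then have words: "x \<in> S" "r1 \<in> lists S" "r2 \<in> lists S"
    using assms ts by auto
  have "([x] @ r1, r1 @ [x]) \<in> pres_eq S R"
    using assms ts words by (intro pres_eq_commute_words) (auto intro: commute)
  then have "(([x] @ r1) @ x # r2, (r1 @ [x]) @ x # r2) \<in> pres_eq S R"
    by (rule pres_eq_append[OF _ pres_eq.refl]) (use words in auto)
  moreover have "(r1 @ [x, x] @ r2, r1 @ [] @ r2) \<in> pres_eq S R"
    by (rule pres_eq_context[OF involution]) (use assms ts words in auto)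
  moreover have "remove1 x ts = r1 @ r2"
    using ts by (simp add: remove1_append)
  ultimately show ?thesis
    using ts by (metis append.assoc append_Cons append_Nil pres_eq.trans)
qed

lemma pres_eq_Nil_if_even_counts:
  "ts \<in> lists L \<Longrightarrow> \<forall>x. even (count_list ts x) \<Longrightarrow> (ts, []) \<in> pres_eq S R"
proof (induction "length ts" arbitrary: ts rule: less_induct)
  case less
  show ?case
  proof (cases ts)
    case Nil
    then show ?thesis by (auto intro: pres_eq.refl)
  next
    case (Cons y rest)
    have "odd (count_list rest y)"
      using less.prems(2)[rule_format, of y] Cons by simp
    then have "y \<in> set rest"
      using count_notin by fastforce
    then have "(ts, remove1 y rest) \<in> pres_eq S R"
      unfolding Cons using less.prems(1) Cons by (intro pres_eq_Cons_remove1) auto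
    moreover have "(remove1 y rest, []) \<in> pres_eq S R"
    proof (rule less.hyps)
      show "length (remove1 y rest) < length ts"
        using \<open>y \<in> set rest\<close> Cons by (simp add: length_remove1)
      show "remove1 y rest \<in> lists L"
        using less.prems(1) Cons set_remove1_subset by fastforce
      show "\<forall>x. even (count_list (remove1 y rest) x)"
      proof
        fix x
        show "even (count_list (remove1 y rest) x)"
          using less.prems(2)[rule_format, of x] Cons \<open>odd (count_list rest y)\<close>
          by (cases "x = y") auto
      qed
    qed
    ultimately show ?thesis
      by (rule pres_eq.trans)
  qed
qed

end

end

context
  fixes n :: nat
begin

text \<open>A constant rather than an abbreviation of the membership in \<open>pres_eq\<close>, so that
  calculational chains of \<open>\<simeq>\<close> can refer to the previous right-hand side by \<open>\<dots>\<close>.\<close>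

definition equivD :: "dgen list \<Rightarrow> dgen list \<Rightarrow> bool" (infix "\<simeq>" 50) where
  "u \<simeq> v \<longleftrightarrow> (u, v) \<in> pres_eq (gensD n) (relsD n)"

lemma A_in_gensD [simp]: "A i j \<in> gensD n \<longleftrightarrow> 1 \<le> i \<and> i < j \<and> j \<le> n"
  by (auto simp: gensD_def)

lemma T_in_gensD [simp]: "T i \<in> gensD n \<longleftrightarrow> 1 \<le> i \<and> i \<le> n"
  by (auto simp: gensD_def)

lemma in_gensP [simp]: "(i, j, e) \<in> gensP n \<longleftrightarrow> 1 \<le> i \<and> i < j \<and> j \<le> n"
  by (auto simp: gensP_def)

lemma relsD_in_lists: "relsD n \<subseteq> lists (gensD n) \<times> lists (gensD n)"
  by (auto simp: relsD_def aD_def min_def max_def)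

lemma aP_in_gensP: "p \<in> {1..n} \<Longrightarrow> q \<in> {1..n} \<Longrightarrow> p \<noteq> q \<Longrightarrow> aP p q e \<in> gensP n"
  by (auto simp: aP_def min_def max_def)

lemma aD_in_gensD: "p \<in> {1..n} \<Longrightarrow> q \<in> {1..n} \<Longrightarrow> p \<noteq> q \<Longrightarrow> aD p q \<in> gensD n"
  by (auto simp: aD_def min_def max_def)

lemma relsP_in_lists: "relsP n \<subseteq> lists (gensP n) \<times> lists (gensP n)"
  unfolding relsP_def
  by (intro Un_least subsetI; elim CollectE exE conjE; simp add: aP_in_gensP)

lemma equivD_refl: "w \<in> lists (gensD n) \<Longrightarrow> w \<simeq> w"
  unfolding equivD_def by (rule pres_eq.refl)

lemma equivD_sym [sym]: "u \<simeq> v \<Longrightarrow> v \<simeq> u"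
  unfolding equivD_def by (rule pres_eq.sym)

lemma equivD_trans [trans]: "u \<simeq> v \<Longrightarrow> v \<simeq> w \<Longrightarrow> u \<simeq> w"
  unfolding equivD_def by (rule pres_eq.trans)

lemma equivD_append: "u \<simeq> v \<Longrightarrow> u' \<simeq> v' \<Longrightarrow> u @ u' \<simeq> v @ v'"
  unfolding equivD_def by (rule pres_eq_append[OF relsD_in_lists])

lemma equivD_context:
  "u \<simeq> v \<Longrightarrow> xs \<in> lists (gensD n) \<Longrightarrow> ys \<in> lists (gensD n) \<Longrightarrow> xs @ u @ ys \<simeq> xs @ v @ ys"
  unfolding equivD_def by (rule pres_eq_context)

lemma equivD_commute_words:
  "x \<in> lists (gensD n) \<Longrightarrow> y \<in> lists (gensD n) \<Longrightarrow> \<forall>a \<in> set x. \<forall>b \<in> set y. [a, b] \<simeq> [b, a] \<Longrightarrow>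
   x @ y \<simeq> y @ x"
  unfolding equivD_def by (rule pres_eq_commute_words[OF relsD_in_lists])

lemma equivD_of_relsD: "(u, v) \<in> relsD n \<Longrightarrow> u \<simeq> v"
  unfolding equivD_def using pres_eq.rel[of u v _ "[]" _ "[]"] by simp

lemma A_squared: "A i j \<in> gensD n \<Longrightarrow> [A i j, A i j] \<simeq> []"
  by (rule equivD_of_relsD) (auto simp: relsD_def)

lemma T_squared: "T k \<in> gensD n \<Longrightarrow> [T k, T k] \<simeq> []"
  by (rule equivD_of_relsD) (auto simp: relsD_def)

lemma T_T_commute: "T k \<in> gensD n \<Longrightarrow> T l \<in> gensD n \<Longrightarrow> [T k, T l] \<simeq> [T l, T k]"
  by (rule equivD_of_relsD) (auto simp: relsD_def)

lemma A_T_commute: "A i j \<in> gensD n \<Longrightarrow> T k \<in> gensD n \<Longrightarrow> k \<notin> {i, j} \<Longrightarrow> [A i j, T k] \<simeq> [T k, A i j]"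
  by (rule equivD_of_relsD) (auto simp: relsD_def)

lemma A_A_commute:
  "A i j \<in> gensD n \<Longrightarrow> A k l \<in> gensD n \<Longrightarrow> {i, j} \<inter> {k, l} = {} \<Longrightarrow> [A i j, A k l] \<simeq> [A k l, A i j]"
  by (rule equivD_of_relsD) (auto simp: relsD_def)

lemma TT_conj_A: "A i j \<in> gensD n \<Longrightarrow> [T i, T j, A i j, T j, T i] \<simeq> [A i j]"
  by (rule equivD_of_relsD) (auto simp: relsD_def)

lemma A_triangle:
  "i \<in> {1..n} \<Longrightarrow> j \<in> {1..n} \<Longrightarrow> k \<in> {1..n} \<Longrightarrow> i \<noteq> j \<Longrightarrow> i \<noteq> k \<Longrightarrow> j \<noteq> k \<Longrightarrow>
   [aD i j, aD i k, aD j k] \<simeq> [aD j k, aD i k, aD i j]"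
  by (rule equivD_of_relsD) (auto simp: relsD_def)

lemma T_T_cancel:
  "T k \<in> gensD n \<Longrightarrow> xs \<in> lists (gensD n) \<Longrightarrow> ys \<in> lists (gensD n) \<Longrightarrow> xs @ T k # T k # ys \<simeq> xs @ ys"
  using equivD_context[OF T_squared, of k xs ys] by simp

lemma T_T_insert:
  "T k \<in> gensD n \<Longrightarrow> xs \<in> lists (gensD n) \<Longrightarrow> ys \<in> lists (gensD n) \<Longrightarrow> xs @ ys \<simeq> xs @ T k # T k # ys"
  by (rule equivD_sym[OF T_T_cancel])

lemma T_conj_A_endpoints:
  assumes "A i j \<in> gensD n"
  shows "[T j, A i j, T j] \<simeq> [T i, A i j, T i]"
proof -
  have "[T j, A i j, T j] \<simeq> [T i, T i, T j, A i j, T j]"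
    using T_T_insert[of i "[]"] assms by simp
  also have "\<dots> \<simeq> [T i, T i, T j, A i j, T j, T i, T i]"
    using T_T_insert[of i "[T i, T i, T j, A i j, T j]" "[]"] assms by simp
  also have "\<dots> = [T i] @ [T i, T j, A i j, T j, T i] @ [T i]"
    by simp
  also have "\<dots> \<simeq> [T i] @ [A i j] @ [T i]"
    by (rule equivD_context[OF TT_conj_A]) (use assms in auto)
  finally show ?thesis
    by simp
qed

section \<open>Moving \<open>\<tau>\<^sub>k\<close> past the image of \<open>\<eta>\<close>\<close>

definition eta_word :: "pgen list \<Rightarrow> dgen list" where
  "eta_word u = concat (map eta_letter u)"

lemma eta_word_simps [simp]:
  "eta_word [] = []" "eta_word (x # u) = eta_letter x @ eta_word u"
  "eta_word (u @ v) = eta_word u @ eta_word v"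
  by (simp_all add: eta_word_def)

fun tau_conj :: "nat \<Rightarrow> pgen \<Rightarrow> pgen" where
  "tau_conj k (i, j, e) = (i, j, e \<noteq> (k \<in> {i, j}))"

fun is_T :: "dgen \<Rightarrow> bool" where
  "is_T (T _) = True"
| "is_T (A _ _) = False"

lemma eta_letter_in_lists: "x \<in> gensP n \<Longrightarrow> eta_letter x \<in> lists (gensD n)"
  by (cases x) auto

lemma eta_word_in_lists: "u \<in> lists (gensP n) \<Longrightarrow> eta_word u \<in> lists (gensD n)"
  by (induction u) (auto simp: eta_letter_in_lists)

lemma eta_letter_conj_T:
  assumes "A i j \<in> gensD n" "T k \<in> gensD n"
  shows "eta_letter (i, j, k \<in> {i, j}) \<simeq> [T k, A i j, T k]"
proof -
  consider "k = i" | "k = j" | "k \<notin> {i, j}"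
    by blast
  then show ?thesis
  proof cases
    case 1
    then show ?thesis
      using assms by (simp add: equivD_refl)
  next
    case 2
    then show ?thesis
      using T_conj_A_endpoints[OF assms(1)] by (auto intro: equivD_sym)
  next
    case 3
    have "[A i j] \<simeq> [T k, T k, A i j]"
      using T_T_insert[of k "[]" "[A i j]"] assms by simp
    also have "\<dots> = [T k] @ [T k, A i j] @ []"
      by simp
    also have "\<dots> \<simeq> [T k] @ [A i j, T k] @ []"
      by (rule equivD_context[OF equivD_sym[OF A_T_commute]]) (use assms 3 in auto)
    finally show ?thesis
      using 3 by simp
  qed
qed

lemma T_commute_eta_letter:
  assumes "(i, j, e) \<in> gensP n" "T k \<in> gensD n" "k \<notin> {i, j}"
  shows "[T k] @ eta_letter (i, j, e) \<simeq> eta_letter (i, j, e) @ [T k]"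
proof (rule equivD_commute_words)
  have "set (eta_letter (i, j, e)) \<subseteq> {T i, A i j}"
    by auto
  moreover have "[T k, T i] \<simeq> [T i, T k]" "[T k, A i j] \<simeq> [A i j, T k]"
    using assms by (auto intro: T_T_commute equivD_sym[OF A_T_commute])
  ultimately show "\<forall>a \<in> set [T k]. \<forall>b \<in> set (eta_letter (i, j, e)). [a, b] \<simeq> [b, a]"
    by auto
qed (use assms eta_letter_in_lists in auto)

lemma T_eta_letter:
  assumes "x \<in> gensP n" "T k \<in> gensD n"
  shows "T k # eta_letter x \<simeq> eta_letter (tau_conj k x) @ [T k]"
proof -
  obtain i j e where x: "x = (i, j, e)"
    by (cases x)
  have A: "A i j \<in> gensD n"
    using assms(1) x by simp
  show ?thesis
  proof (cases "k \<in> {i, j}")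
    case False
    then show ?thesis
      using T_commute_eta_letter assms x by simp
  next
    case True
    have conj: "eta_letter (i, j, True) \<simeq> [T k, A i j, T k]"
      using eta_letter_conj_T[OF A assms(2)] True by simp
    show ?thesis
    proof (cases e)
      case False
      have "T k # eta_letter x \<simeq> [T k, A i j, T k, T k]"
        using T_T_insert[of k "[T k, A i j]" "[]"] assms x False by simp
      also have "\<dots> = [T k, A i j, T k] @ [T k]"
        by simp
      also have "\<dots> \<simeq> eta_letter (i, j, True) @ [T k]"
        by (rule equivD_append[OF equivD_sym[OF conj] equivD_refl]) (use assms in simp)
      finally show ?thesis
        using x True False by simp
    next
      case e: True
      have "T k # eta_letter x \<simeq> [T k] @ [T k, A i j, T k] @ []"
        using equivD_context[OF conj, of "[T k]" "[]"] assms x e by simp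
      also have "\<dots> \<simeq> [A i j, T k]"
        using T_T_cancel[of k "[]" "[A i j, T k]"] assms A by simp
      finally show ?thesis
        using x True e by simp
    qed
  qed
qed

lemma tau_conj_in_gensP: "x \<in> gensP n \<Longrightarrow> tau_conj k x \<in> gensP n"
  by (cases x) simp

lemma T_eta_word:
  assumes "T k \<in> gensD n"
  shows "u \<in> lists (gensP n) \<Longrightarrow> T k # eta_word u \<simeq> eta_word (map (tau_conj k) u) @ [T k]"
proof (induction u)
  case Nil
  then show ?case
    using assms by (auto intro: equivD_refl)
next
  case (Cons x u)
  have "T k # eta_word (x # u) = (T k # eta_letter x) @ eta_word u"
    by simp
  also have "\<dots> \<simeq> (eta_letter (tau_conj k x) @ [T k]) @ eta_word u"
    by (rule equivD_append[OF T_eta_letter equivD_refl]) (use Cons.prems assms eta_word_in_lists in auto)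
  also have "\<dots> = eta_letter (tau_conj k x) @ (T k # eta_word u)"
    by simp
  also have "\<dots> \<simeq> eta_letter (tau_conj k x) @ (eta_word (map (tau_conj k) u) @ [T k])"
    by (rule equivD_append[OF equivD_refl Cons.IH])
      (use Cons.prems eta_letter_in_lists tau_conj_in_gensP in auto)
  finally show ?case
    by simp
qed

lemma equivD_eta_word_T_split:
  "w \<in> lists (gensD n) \<Longrightarrow> \<exists>u \<in> lists (gensP n). w \<simeq> eta_word u @ filter is_T w"
proof (induction w)
  case Nil
  then show ?case
    by (auto intro!: bexI[of _ "[]"] equivD_refl)
next
  case (Cons x w)
  then obtain u where u: "u \<in> lists (gensP n)" "w \<simeq> eta_word u @ filter is_T w"
    by auto
  have "x # w \<simeq> [x] @ (eta_word u @ filter is_T w)"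
    using equivD_append[OF equivD_refl u(2), of "[x]"] Cons.prems by simp
  then show ?case
  proof (cases x)
    case (A i j)
    then have "x # w \<simeq> eta_word ((i, j, False) # u) @ filter is_T (x # w)"
      using \<open>x # w \<simeq> _\<close> by simp
    moreover have "(i, j, False) # u \<in> lists (gensP n)"
      using Cons.prems A u(1) by simp
    ultimately show ?thesis
      by blast
  next
    case (T k)
    have "[x] @ (eta_word u @ filter is_T w) = (T k # eta_word u) @ filter is_T w"
      using T by simp
    also have "\<dots> \<simeq> (eta_word (map (tau_conj k) u) @ [T k]) @ filter is_T w"
      by (rule equivD_append[OF T_eta_word equivD_refl]) (use Cons.prems T u in auto)
    also have "\<dots> = eta_word (map (tau_conj k) u) @ filter is_T (x # w)"
      using T by simp
    finally have "x # w \<simeq> eta_word (map (tau_conj k) u) @ filter is_T (x # w)"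
      using \<open>x # w \<simeq> _\<close> by (rule equivD_trans[rotated])
    moreover have "map (tau_conj k) u \<in> lists (gensP n)"
      using u(1) by (induction u) (auto simp: tau_conj_in_gensP)
    ultimately show ?thesis
      by blast
  qed
qed

lemma T_word_equivD_Nil_if_even_counts:
  assumes "ts \<in> lists (gensD n)" "set ts \<subseteq> range T" "\<forall>i. even (count_list ts (T i))"
  shows "ts \<simeq> []"
  unfolding equivD_def
proof (rule pres_eq_Nil_if_even_counts[OF relsD_in_lists, of "gensD n \<inter> range T"])
  show "\<And>x. x \<in> gensD n \<inter> range T \<Longrightarrow> ([x, x], []) \<in> pres_eq (gensD n) (relsD n)"
    using T_squared unfolding equivD_def by auto
  show "\<And>x y. x \<in> gensD n \<inter> range T \<Longrightarrow> y \<in> gensD n \<inter> range T \<Longrightarrow>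
      ([x, y], [y, x]) \<in> pres_eq (gensD n) (relsD n)"
    using T_T_commute unfolding equivD_def by auto
  show "ts \<in> lists (gensD n \<inter> range T)"
    using assms(1,2) by auto
  show "\<forall>x. even (count_list ts x)"
  proof
    fix x
    have "A i j \<notin> set ts" for i j
      using assms(2) by auto
    then show "even (count_list ts x)"
      using assms(3) by (cases x) auto
  qed
qed

section \<open>\<open>\<eta>\<close> respects the relations of \<open>G\<^sub>P\<close>\<close>

lemma eta_letter_square:
  assumes "x \<in> gensP n"
  shows "eta_letter x @ eta_letter x \<simeq> []"
proof -
  obtain i j e where x: "x = (i, j, e)"
    by (cases x)
  have A: "A i j \<in> gensD n"
    using assms x by simp
  show ?thesis
  proof (cases e)
    case False
    then show ?thesis
      using A_squared[OF A] x by simp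
  next
    case True
    have "eta_letter x @ eta_letter x = [T i, A i j] @ T i # T i # [A i j, T i]"
      using x True by simp
    also have "\<dots> \<simeq> [T i] @ [A i j, A i j] @ [T i]"
      using T_T_cancel[of i "[T i, A i j]" "[A i j, T i]"] A by simp
    also have "\<dots> \<simeq> [T i] @ [] @ [T i]"
      by (rule equivD_context[OF A_squared[OF A]]) (use A in auto)
    also have "\<dots> \<simeq> []"
      using T_squared[of i] A by simp
    finally show ?thesis .
  qed
qed

lemma eta_letter_commute:
  assumes "(i, j, e) \<in> gensP n" "(k, l, e') \<in> gensP n" "{i, j} \<inter> {k, l} = {}"
  shows "eta_letter (i, j, e) @ eta_letter (k, l, e') \<simeq> eta_letter (k, l, e') @ eta_letter (i, j, e)"
proof (rule equivD_commute_words)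
  have gens: "T i \<in> gensD n" "A i j \<in> gensD n" "T k \<in> gensD n" "A k l \<in> gensD n"
    using assms(1,2) by auto
  have "i \<notin> {k, l}" "j \<notin> {k, l}" "k \<notin> {i, j}" "l \<notin> {i, j}"
    using assms(3) by auto
  then have "[T i, T k] \<simeq> [T k, T i]" "[T i, A k l] \<simeq> [A k l, T i]"
    "[A i j, T k] \<simeq> [T k, A i j]" "[A i j, A k l] \<simeq> [A k l, A i j]"
    using gens assms(3)
    by (auto intro: T_T_commute equivD_sym[OF A_T_commute] A_T_commute A_A_commute)
  moreover have "set (eta_letter (i, j, e)) \<subseteq> {T i, A i j}" "set (eta_letter (k, l, e')) \<subseteq> {T k, A k l}"
    by auto
  ultimately show "\<forall>a \<in> set (eta_letter (i, j, e)). \<forall>b \<in> set (eta_letter (k, l, e')). [a, b] \<simeq> [b, a]"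
    by blast
qed (use assms eta_letter_in_lists in blast)+

lemma conj_T_concat:
  assumes "T k \<in> gensD n"
  shows "xs \<in> lists (gensD n) \<Longrightarrow> xs \<noteq> [] \<Longrightarrow> concat (map (\<lambda>a. [T k, a, T k]) xs) \<simeq> T k # xs @ [T k]"
proof (induction xs)
  case Nil
  then show ?case
    by simp
next
  case (Cons a xs)
  show ?case
  proof (cases "xs = []")
    case True
    then show ?thesis
      using Cons.prems assms by (simp add: equivD_refl)
  next
    case False
    have "concat (map (\<lambda>a. [T k, a, T k]) (a # xs)) = [T k, a, T k] @ concat (map (\<lambda>a. [T k, a, T k]) xs)"
      by simp
    also have "\<dots> \<simeq> [T k, a, T k] @ (T k # xs @ [T k])"
      by (rule equivD_append[OF equivD_refl Cons.IH]) (use Cons.prems False assms in auto)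
    also have "\<dots> = [T k, a] @ T k # T k # xs @ [T k]"
      by simp
    also have "\<dots> \<simeq> [T k, a] @ xs @ [T k]"
      by (rule T_T_cancel) (use Cons.prems assms in auto)
    finally show ?thesis
      by simp
  qed
qed

lemma eta_letter_aP_conj_T:
  assumes "p \<in> {1..n}" "q \<in> {1..n}" "p \<noteq> q" "x \<in> {1..n}"
  shows "eta_letter (aP p q (x \<in> {p, q})) \<simeq> [T x, aD p q, T x]"
proof -
  have "{min p q, max p q} = {p, q}"
    by (auto simp: min_def max_def)
  moreover have "A (min p q) (max p q) \<in> gensD n"
    using assms by (auto simp: min_def max_def)
  ultimately show ?thesis
    using eta_letter_conj_T[of "min p q" "max p q" x] assms(4) by (simp add: aP_def aD_def)
qed

lemma eta_word_triangle:
  assumes "i \<in> {1..n}" "j \<in> {1..n}" "k \<in> {1..n}" "i \<noteq> j" "i \<noteq> k" "j \<noteq> k"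
    and "even (of_bool eij + of_bool eik + of_bool ejk :: nat)"
  shows "eta_word [aP i j eij, aP i k eik, aP j k ejk] \<simeq> eta_word [aP j k ejk, aP i k eik, aP i j eij]"
proof (cases "eij \<or> eik \<or> ejk")
  case False
  then show ?thesis
    using A_triangle[OF assms(1-6)] by (simp add: aP_def aD_def)
next
  case True
  txt \<open>Exactly two exponents are 1, and the image of the relation is the conjugate by \<open>\<tau>\<^sub>x\<close>
    of a triangle relation of \<open>G\<^sub>D\<close>, where \<open>x\<close> is the common vertex of the two edges.\<close>
  then obtain x where x: "x \<in> {i, j, k}" "eij = (x \<in> {i, j})" "eik = (x \<in> {i, k})" "ejk = (x \<in> {j, k})"
    using assms(4-7) by (cases eij; cases eik; cases ejk) auto
  have Tx: "T x \<in> gensD n"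
    using x(1) assms(1-3) by auto
  have conj: "eta_letter (aP p q (x \<in> {p, q})) \<simeq> [T x, aD p q, T x]"
    if "p \<in> {i, j, k}" "q \<in> {i, j, k}" "p \<noteq> q" for p q
    using eta_letter_aP_conj_T that x(1) assms(1-3) by auto
  have words: "[aD i j, aD i k, aD j k] \<in> lists (gensD n)" "[aD j k, aD i k, aD i j] \<in> lists (gensD n)"
    using assms(1-6) by (auto intro: aD_in_gensD)
  have "eta_word [aP i j eij, aP i k eik, aP j k ejk]
      \<simeq> concat (map (\<lambda>a. [T x, a, T x]) [aD i j, aD i k, aD j k])"
    using equivD_append[OF conj[of i j] equivD_append[OF conj[of i k] conj[of j k]]] x assms(4-6)
    by simp
  also have "\<dots> \<simeq> T x # [aD i j, aD i k, aD j k] @ [T x]"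
    by (rule conj_T_concat[OF Tx words(1)]) simp
  also have "\<dots> \<simeq> T x # [aD j k, aD i k, aD i j] @ [T x]"
    using equivD_context[OF A_triangle[OF assms(1-6)], of "[T x]" "[T x]"] Tx by simp
  also have "\<dots> \<simeq> concat (map (\<lambda>a. [T x, a, T x]) [aD j k, aD i k, aD i j])"
    by (rule equivD_sym[OF conj_T_concat[OF Tx words(2)]]) simp
  also have "\<dots> \<simeq> eta_word [aP j k ejk, aP i k eik, aP i j eij]"
    using equivD_append[OF conj[of j k] equivD_append[OF conj[of i k] conj[of i j]]] x assms(4-6)
    by (simp add: equivD_sym)
  finally show ?thesis .
qed

lemma eta_word_respects_relsP:
  assumes "(u, v) \<in> relsP n"
  shows "eta_word u \<simeq> eta_word v"
proof -
  consider (square) g where "u = [g, g]" "v = []" "g \<in> gensP n"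
    | (commute) i j e k l e' where "u = [(i, j, e), (k, l, e')]" "v = [(k, l, e'), (i, j, e)]"
      "(i, j, e) \<in> gensP n" "(k, l, e') \<in> gensP n" "{i, j} \<inter> {k, l} = {}"
    | (triangle) i j k eij eik ejk where "u = [aP i j eij, aP i k eik, aP j k ejk]"
      "v = [aP j k ejk, aP i k eik, aP i j eij]"
      "i \<in> {1..n}" "j \<in> {1..n}" "k \<in> {1..n}" "i \<noteq> j" "i \<noteq> k" "j \<noteq> k"
      "even (of_bool eij + of_bool eik + of_bool ejk :: nat)"
    using assms unfolding relsP_def by (elim UnE CollectE exE conjE Pair_inject) blast+
  then show ?thesis
  proof cases
    case square
    then show ?thesis
      using eta_letter_square by simp
  next
    case commute
    then show ?thesis
      using eta_letter_commute by simp
  next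
    case triangle
    then show ?thesis
      using eta_word_triangle by simp
  qed
qed

lemma eta_word_respects_pres_eq:
  "(u, v) \<in> pres_eq (gensP n) (relsP n) \<Longrightarrow> eta_word u \<simeq> eta_word v"
proof (induction rule: pres_eq.induct)
  case (refl w)
  then show ?case
    by (intro equivD_refl eta_word_in_lists)
next
  case (sym u v)
  show ?case
    using sym.IH by (rule equivD_sym)
next
  case (trans u v w)
  show ?case
    using trans.IH by (rule equivD_trans)
next
  case (rel u v xs ys)
  then show ?case
    using equivD_context[OF eta_word_respects_relsP] eta_word_in_lists by simp
qed

section \<open>The image of \<open>\<eta>\<close>\<close>

lemma equivD_eta_word_if_even_T_counts:
  assumes w: "w \<in> lists (gensD n)" and even: "\<forall>i. even (count_list w (T i))"
  shows "\<exists>u \<in> lists (gensP n). w \<simeq> eta_word u"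
proof -
  obtain u where u: "u \<in> lists (gensP n)" "w \<simeq> eta_word u @ filter is_T w"
    using equivD_eta_word_T_split[OF w] by blast
  have "filter is_T w \<simeq> []"
  proof (rule T_word_equivD_Nil_if_even_counts)
    show "filter is_T w \<in> lists (gensD n)" "set (filter is_T w) \<subseteq> range T"
      using w by (auto elim: is_T.elims)
    have "count_list (filter is_T w) (T i) = count_list w (T i)" for i
      by (induction w) auto
    then show "\<forall>i. even (count_list (filter is_T w) (T i))"
      using even by simp
  qed
  then have "eta_word u @ filter is_T w \<simeq> eta_word u @ []"
    using u(1) eta_word_in_lists by (intro equivD_append equivD_refl)
  then show ?thesis
    using u by (auto intro: equivD_trans)
qed

lemma eta_class:
  assumes "w \<in> lists (gensP n)"
  shows "eta n (pres_eq (gensP n) (relsP n) `` {w}) = pres_eq (gensD n) (relsD n) `` {eta_word w}"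
proof -
  have "(\<lambda>w. pres_eq (gensD n) (relsD n) `` {eta_word w}) respects pres_eq (gensP n) (relsP n)"
    using equiv_class_eq[OF equiv_pres_eq[OF relsD_in_lists]] eta_word_respects_pres_eq
    by (auto simp: congruent_def equivD_def)
  then show ?thesis
    using UN_equiv_class[OF equiv_pres_eq[OF relsP_in_lists] _ assms]
    by (simp add: eta_def eta_word_def)
qed

lemma carrier_GD: "carrier (GD n) = lists (gensD n) // pres_eq (gensD n) (relsD n)"
  by (simp add: GD_def presented_group_def)

lemma carrier_GP: "carrier (GP n) = lists (gensP n) // pres_eq (gensP n) (relsP n)"
  by (simp add: GP_def presented_group_def)

lemma length_filter_eq_count_list: "length (filter (\<lambda>x. x = y) xs) = count_list xs y"
  by (induction xs) auto

lemma even_count_T_eta_word: "even (count_list (eta_word u) (T i))"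
proof (induction u)
  case Nil
  then show ?case
    by simp
next
  case (Cons x u)
  then show ?case
    by (cases x) auto
qed

lemma eta_image_subset_HD_carrier: "eta n ` carrier (GP n) \<subseteq> HD_carrier n"
proof
  fix Y
  assume "Y \<in> eta n ` carrier (GP n)"
  then obtain w where w: "w \<in> lists (gensP n)" "Y = eta n (pres_eq (gensP n) (relsP n) `` {w})"
    by (auto simp: carrier_GP elim!: quotientE)
  then have Y: "Y = pres_eq (gensD n) (relsD n) `` {eta_word w}"
    by (simp add: eta_class)
  then have "Y \<in> carrier (GD n)"
    using w(1) by (simp add: carrier_GD quotientI eta_word_in_lists)
  moreover have "eta_word w \<in> Y"
    using w(1) Y equiv_class_self[OF equiv_pres_eq[OF relsD_in_lists]] eta_word_in_lists by simp
  ultimately show "Y \<in> HD_carrier n"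
    unfolding HD_carrier_def length_filter_eq_count_list using even_count_T_eta_word by blast
qed

lemma HD_carrier_subset_eta_image: "HD_carrier n \<subseteq> eta n ` carrier (GP n)"
proof
  fix Y
  assume "Y \<in> HD_carrier n"
  then obtain w where Y: "Y \<in> lists (gensD n) // pres_eq (gensD n) (relsD n)" "w \<in> Y"
    and even: "\<forall>i. even (count_list w (T i))"
    by (auto simp: HD_carrier_def carrier_GD length_filter_eq_count_list)
  have w: "w \<in> lists (gensD n)"
    using in_quotient_imp_subset[OF equiv_pres_eq[OF relsD_in_lists] Y(1)] Y(2) by blast
  obtain w0 where "Y = pres_eq (gensD n) (relsD n) `` {w0}"
    using Y(1) by (auto elim: quotientE)
  then have Y_eq: "Y = pres_eq (gensD n) (relsD n) `` {w}"
    using Y(2) equiv_class_eq[OF equiv_pres_eq[OF relsD_in_lists]] by simp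
  obtain u where u: "u \<in> lists (gensP n)" "w \<simeq> eta_word u"
    using equivD_eta_word_if_even_T_counts[OF w even] by blast
  then have "Y = eta n (pres_eq (gensP n) (relsP n) `` {u})"
    using Y_eq eta_class[OF u(1)] equiv_class_eq[OF equiv_pres_eq[OF relsD_in_lists]]
    by (simp add: equivD_def)
  moreover have "pres_eq (gensP n) (relsP n) `` {u} \<in> carrier (GP n)"
    using u(1) by (simp add: carrier_GP quotientI)
  ultimately show "Y \<in> eta n ` carrier (GP n)"
    by blast
qed

end

theorem mainTheorem5:
  fixes n :: nat
  assumes "n > 2"
  shows "eta_image n \<cong> HD n"
proof -
  have "eta_image n = HD n"
    unfolding eta_image_def HD_def
    using eta_image_subset_HD_carrier HD_carrier_subset_eta_image by (simp add: subset_antisym)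
  then show ?thesis
    by simp
qed

end
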